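(* Let $\mathcal{F}^*=\{f\in\bar{\mathcal{F}} : \mathbb{E}_{\theta}[f(Z)]\le C \text{ for all }\theta\in\Theta_0\}$ (the rescaled set $C\cdot\mathcal{E}$ of all $e$-values, within the ambient class), and let $\mathcal{F}'\subseteq\bar{\mathcal{F}}$ be any incentive-aligned menu; assume the attainment assumption holds for both. Assume that for each $\theta\in\Theta_1$ the map $L\mapsto u(\theta,L)$ is affine on $[0,\infty)$. Then for every probability distribution $Q$ on $\Theta$, $$U(Q,\mathcal{F}^* )\ \ge\ U(Q,\mathcal{F}'),$$ regardless of which maximizers the agents select as best responses.
   Context: Let $\Theta$ be a set of types partitioned as $\Theta=\Theta_0\sqcup\Theta_1$ (null and nonnull types), and let $(P_\theta)_{\theta\in\Theta}$ be probability distributions on a measurable space $\mathcal{Z}$; $\mathbb{E}_\theta$ denotes expectation with $Z\sim P_\theta$. Fix a cost $C>0$. Fix an ambient class $\bar{\mathcal{F}}$ of measurable functions $f:\mathcal{Z}\to[0,\infty)$ ("license functions") with $\mathbb{E}_\theta[f(Z)]<\infty$ for all $\theta$. A menu is a subset $\mathcal{F}\subseteq\bar{\mathcal{F}}$; the attainment assumption for $\mathcal{F}$ means that for every $\theta$, $\sup_{f\in\mathcal{F}}\mathbb{E}_\theta[f(Z)]$ is attained when $\mathcal{F}\ne\emptyset$. Agent behavior: an agent of type $\theta$ offered $\mathcal{F}$ opts in ($I=1$) iff $\mathcal{F}\neq\emptyset$ and $\max_{f\in\mathcal{F}}\mathbb{E}_\theta[f(Z)]>C$, in which case it selects some maximizer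 $f^{\mathrm{br}}(\cdot;\theta,\mathcal{F})\in\arg\max_{f\in\mathcal{F}}\mathbb{E}_\theta[f(Z)]$; otherwise it opts out ($I=0$). The realized license is $L=f^{\mathrm{br}}(Z;\theta,\mathcal{F})$ with $Z\sim P_\theta$. The principal's utility is a function $u:\Theta\times[0,\infty)\to\mathbb{R}$ such that: for $\theta\in\Theta_1$, $u(\theta,\cdot)$ is nondecreasing and $u(\theta,L)\ge 0$; for $\theta\in\Theta_0$, $u(\theta,\cdot)$ is nonincreasing, $u(\theta,0)\le0$ and $u(\theta,L)<0$ for all $L>0$. For a probability distribution $Q$ on $\Theta$, $U(Q,\mathcal{F})=\mathbb{E}_{\theta\sim Q}\big[\mathbb{E}_{Z\sim P_\theta}[u(\theta,L)\cdot I\mid\theta]\big]$. A menu $\mathcal{F}$ is incentive-aligned if $\mathbb{E}_\theta[f(Z)]\le C$ for all $\theta\in\Theta_0$ and all $f\in\mathcal{F}$. An $e$-value is a measurable $g\ge 0$ with $\mathbb{E}_\theta[g(Z)]\le 1$ for all $\theta\in\Theta_0$, and $\mathcal{E}$ is the set of $e$-values. *)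

theory Defs
  imports "HOL-Probability.Probability"
begin

definition expect :: "('t \<Rightarrow> 'z measure) \<Rightarrow> 't \<Rightarrow> ('z \<Rightarrow> real) \<Rightarrow> real" where
  "expect P \<theta> f = (\<integral>z. f z \<partial>(P \<theta>))"

definition ambient_ok :: "'z measure \<Rightarrow> ('t \<Rightarrow> 'z measure) \<Rightarrow> ('z \<Rightarrow> real) set \<Rightarrow> bool" where
  "ambient_ok M P Fbar \<longleftrightarrow>
     (\<forall>f\<in>Fbar. f \<in> borel_measurable M \<and> (\<forall>z\<in>space M. 0 \<le> f z) \<and> (\<forall>\<theta>. integrable (P \<theta>) f))"

definition attainment :: "('t \<Rightarrow> 'z measure) \<Rightarrow> ('z \<Rightarrow> real) set \<Rightarrow> bool" where
  "attainment P F \<longleftrightarrow>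
     (\<forall>\<theta>. F \<noteq> {} \<longrightarrow> (\<exists>f\<in>F. \<forall>g\<in>F. expect P \<theta> g \<le> expect P \<theta> f))"

definition opts_in :: "('t \<Rightarrow> 'z measure) \<Rightarrow> real \<Rightarrow> ('z \<Rightarrow> real) set \<Rightarrow> 't \<Rightarrow> bool" where
  "opts_in P C F \<theta> \<longleftrightarrow> F \<noteq> {} \<and> (SUP f\<in>F. expect P \<theta> f) > C"

definition best_response :: "('t \<Rightarrow> 'z measure) \<Rightarrow> real \<Rightarrow> ('z \<Rightarrow> real) set
    \<Rightarrow> ('t \<Rightarrow> 'z \<Rightarrow> real) \<Rightarrow> bool" where
  "best_response P C F br \<longleftrightarrow>
     (\<forall>\<theta>. opts_in P C F \<theta> \<longrightarrow>
        br \<theta> \<in> F \<and> (\<forall>g\<in>F. expect P \<theta> g \<le> expect P \<theta> (br \<theta>)))"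

definition cond_util :: "('t \<Rightarrow> 'z measure) \<Rightarrow> real \<Rightarrow> ('t \<Rightarrow> real \<Rightarrow> real)
    \<Rightarrow> ('z \<Rightarrow> real) set \<Rightarrow> ('t \<Rightarrow> 'z \<Rightarrow> real) \<Rightarrow> 't \<Rightarrow> real" where
  "cond_util P C u F br \<theta> =
     (if opts_in P C F \<theta> then (\<integral>z. u \<theta> (br \<theta> z) \<partial>(P \<theta>)) else 0)"

definition principal_utility :: "'t measure \<Rightarrow> ('t \<Rightarrow> 'z measure) \<Rightarrow> real \<Rightarrow> ('t \<Rightarrow> real \<Rightarrow> real)
    \<Rightarrow> ('z \<Rightarrow> real) set \<Rightarrow> ('t \<Rightarrow> 'z \<Rightarrow> real) \<Rightarrow> real" where
  "principal_utility Q P C u F br = (\<integral>\<theta>. cond_util P C u F br \<theta> \<partial>Q)"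

definition incentive_aligned :: "('t \<Rightarrow> 'z measure) \<Rightarrow> real \<Rightarrow> 't set \<Rightarrow> ('z \<Rightarrow> real) set \<Rightarrow> bool" where
  "incentive_aligned P C \<Theta>0 F \<longleftrightarrow> (\<forall>\<theta>\<in>\<Theta>0. \<forall>f\<in>F. expect P \<theta> f \<le> C)"

definition evalue_menu :: "('t \<Rightarrow> 'z measure) \<Rightarrow> real \<Rightarrow> 't set \<Rightarrow> ('z \<Rightarrow> real) set \<Rightarrow> ('z \<Rightarrow> real) set" where
  "evalue_menu P C \<Theta>0 Fbar = {f\<in>Fbar. \<forall>\<theta>\<in>\<Theta>0. expect P \<theta> f \<le> C}"

text \<open>Standing assumptions on the principal's utility (Theta1 = complement of Theta0).\<close>
definition utility_ok :: "'t set \<Rightarrow> ('t \<Rightarrow> real \<Rightarrow> real) \<Rightarrow> bool" where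
  "utility_ok \<Theta>0 u \<longleftrightarrow>
     (\<forall>\<theta>. \<theta> \<notin> \<Theta>0 \<longrightarrow> mono_on {0..} (u \<theta>) \<and> (\<forall>L\<ge>0. 0 \<le> u \<theta> L)) \<and>
     (\<forall>\<theta>\<in>\<Theta>0. antimono_on {0..} (u \<theta>) \<and> u \<theta> 0 \<le> 0 \<and> (\<forall>L>0. u \<theta> L < 0))"

end

theory Submission
  imports Defs
begin

text \<open>Null types never opt in to an incentive-aligned menu, and \<open>F\<^sup>*\<close> is incentive-aligned,
  so both menus yield utility zero on \<open>\<Theta>\<^sub>0\<close>. Every incentive-aligned menu is contained in
  \<open>F\<^sup>*\<close>, so a nonnull type opting in to it also opts in to \<open>F\<^sup>*\<close> and there attains at
  least as large an expected license. Affinity of \<open>u(\<theta>,\<cdot>)\<close> turns the conditional utility into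
  \<open>a + b \<cdot> E\<^sub>\<theta>[L]\<close> with \<open>b \<ge> 0\<close>, so the comparison holds type by type and integrates over \<open>Q\<close>.\<close>

lemma not_opts_in_if_bounded:
  assumes "\<And>f. f \<in> F \<Longrightarrow> expect P \<theta> f \<le> C"
  shows "\<not> opts_in P C F \<theta>"
proof
  assume opt: "opts_in P C F \<theta>"
  then have "(SUP f\<in>F. expect P \<theta> f) \<le> C"
    using assms by (intro cSUP_least) (auto simp: opts_in_def)
  with opt show False by (simp add: opts_in_def)
qed

lemma cond_util_eq_0_if_incentive_aligned:
  assumes "incentive_aligned P C \<Theta>0 F" "\<theta> \<in> \<Theta>0"
  shows "cond_util P C u F br \<theta> = 0"
  using assms not_opts_in_if_bounded[of F P \<theta> C]
  by (simp add: cond_util_def incentive_aligned_def)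

lemma incentive_aligned_evalue_menu: "incentive_aligned P C \<Theta>0 (evalue_menu P C \<Theta>0 Fbar)"
  by (simp add: incentive_aligned_def evalue_menu_def)

lemma incentive_aligned_subset_evalue_menu:
  assumes "F \<subseteq> Fbar" "incentive_aligned P C \<Theta>0 F"
  shows "F \<subseteq> evalue_menu P C \<Theta>0 Fbar"
  using assms by (auto simp: evalue_menu_def incentive_aligned_def)

lemma opts_in_mono:
  assumes "F \<subseteq> G" "attainment P G" "opts_in P C F \<theta>"
  shows "opts_in P C G \<theta>"
proof -
  have F_ne: "F \<noteq> {}" and G_ne: "G \<noteq> {}"
    using assms by (auto simp: opts_in_def)
  then obtain fmax where "\<forall>g\<in>G. expect P \<theta> g \<le> expect P \<theta> fmax"
    using assms(2) by (auto simp: attainment_def)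
  then have "bdd_above ((\<lambda>f. expect P \<theta> f) ` G)"
    by (auto intro: bdd_aboveI2)
  then have "(SUP f\<in>F. expect P \<theta> f) \<le> (SUP f\<in>G. expect P \<theta> f)"
    using F_ne assms(1) by (intro cSUP_subset_mono) auto
  with assms(3) G_ne show ?thesis by (simp add: opts_in_def)
qed

lemma integral_affine_comp:
  fixes f :: "'a \<Rightarrow> real"
  assumes "prob_space N" "integrable N f" "\<And>z. z \<in> space N \<Longrightarrow> 0 \<le> f z"
    and "\<forall>L\<ge>0. g L = a + b * L"
  shows "(\<integral>z. g (f z) \<partial>N) = a + b * (\<integral>z. f z \<partial>N)"
proof -
  interpret prob_space N by (fact assms(1))
  have "(\<integral>z. g (f z) \<partial>N) = (\<integral>z. a + b * f z \<partial>N)"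
    using assms(3,4) by (intro Bochner_Integration.integral_cong) auto
  also have "\<dots> = a + b * (\<integral>z. f z \<partial>N)"
    using assms(2) by (simp add: prob_space)
  finally show ?thesis .
qed

lemma affine_mono_nonneg_coeffs:
  assumes "\<forall>L\<ge>0. g L = a + b * L" "mono_on {0..} g" "0 \<le> g 0"
  shows "0 \<le> a" "0 \<le> (b::real)"
proof -
  show "0 \<le> a" using assms(1,3) by auto
  have "g 0 \<le> g 1" using assms(2) by (auto intro: mono_onD)
  then show "0 \<le> b" using assms(1) by auto
qed

lemma cond_util_affine:
  assumes "\<And>\<theta>. prob_space (P \<theta>)" "\<And>\<theta>. sets (P \<theta>) = sets M" "ambient_ok M P Fbar"
    and "\<forall>L\<ge>0. u \<theta> L = a + b * L" "F \<subseteq> Fbar" "best_response P C F br"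
  shows "cond_util P C u F br \<theta>
           = (if opts_in P C F \<theta> then a + b * expect P \<theta> (br \<theta>) else 0)"
proof (cases "opts_in P C F \<theta>")
  case True
  then have br_amb: "br \<theta> \<in> Fbar"
    using assms(5,6) by (auto simp: best_response_def)
  have "space (P \<theta>) = space M"
    using assms(2) by (rule sets_eq_imp_space_eq)
  then have "(\<integral>z. u \<theta> (br \<theta> z) \<partial>P \<theta>) = a + b * expect P \<theta> (br \<theta>)"
    using br_amb assms(3) unfolding expect_def ambient_ok_def
    by (intro integral_affine_comp[OF assms(1) _ _ assms(4)]) auto
  with True show ?thesis
    by (simp add: cond_util_def)
qed (simp add: cond_util_def)

lemma cond_util_le_larger_menu:
  assumes P_prob: "\<And>\<theta>. prob_space (P \<theta>)" and P_sets: "\<And>\<theta>. sets (P \<theta>) = sets M"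
    and ambient: "ambient_ok M P Fbar"
    and affine: "\<forall>L\<ge>0. u \<theta> L = a + b * L"
    and mono: "mono_on {0..} (u \<theta>)" and nonneg: "0 \<le> u \<theta> 0"
    and FG: "F \<subseteq> G" "G \<subseteq> Fbar" and att: "attainment P G"
    and brF: "best_response P C F brF" and brG: "best_response P C G brG"
  shows "cond_util P C u F brF \<theta> \<le> cond_util P C u G brG \<theta>"
proof -
  have a: "0 \<le> a" and b: "0 \<le> b"
    using affine_mono_nonneg_coeffs[OF affine mono nonneg] by auto
  have F_util: "cond_util P C u F brF \<theta>
      = (if opts_in P C F \<theta> then a + b * expect P \<theta> (brF \<theta>) else 0)"
    using FG by (intro cond_util_affine[where M = M and Fbar = Fbar])
      (auto simp: P_sets affine intro: assms)
  have G_util: "cond_util P C u G brG \<theta>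
      = (if opts_in P C G \<theta> then a + b * expect P \<theta> (brG \<theta>) else 0)"
    using FG by (intro cond_util_affine[where M = M and Fbar = Fbar])
      (auto simp: P_sets affine intro: assms)
  show ?thesis
  proof (cases "opts_in P C F \<theta>")
    case False
    have "0 \<le> expect P \<theta> (brG \<theta>)" if "opts_in P C G \<theta>"
    proof -
      have "brG \<theta> \<in> Fbar"
        using that brG FG(2) by (auto simp: best_response_def)
      then have "\<forall>z\<in>space (P \<theta>). 0 \<le> brG \<theta> z"
        using ambient sets_eq_imp_space_eq[OF P_sets] by (auto simp: ambient_ok_def)
      then show ?thesis
        unfolding expect_def by (intro integral_nonneg_AE) auto
    qed
    then show ?thesis
      using False a b by (simp add: F_util G_util)
  next
    case True
    then have optG: "opts_in P C G \<theta>"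
      using FG(1) att by (rule opts_in_mono[rotated 2])
    then have "expect P \<theta> (brF \<theta>) \<le> expect P \<theta> (brG \<theta>)"
      using True brF brG FG(1) by (auto simp: best_response_def)
    then show ?thesis
      using True optG b by (simp add: F_util G_util mult_left_mono)
  qed
qed

theorem theorem2p4:
  fixes M :: "'z measure" and P :: "'t \<Rightarrow> 'z measure" and Q :: "'t measure"
    and \<Theta>0 :: "'t set" and C :: real and u :: "'t \<Rightarrow> real \<Rightarrow> real"
    and Fbar F' :: "('z \<Rightarrow> real) set" and br_star br' :: "'t \<Rightarrow> 'z \<Rightarrow> real"
  assumes P_prob: "\<And>\<theta>. prob_space (P \<theta>)" and P_sets: "\<And>\<theta>. sets (P \<theta>) = sets M"
    and C_pos: "C > 0"
    and ambient: "ambient_ok M P Fbar"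
    and u_ok: "utility_ok \<Theta>0 u"
    and u_affine: "\<And>\<theta>. \<theta> \<notin> \<Theta>0 \<Longrightarrow> \<exists>a b. \<forall>L\<ge>0. u \<theta> L = a + b * L"
    and F'_sub: "F' \<subseteq> Fbar"
    and F'_ia: "incentive_aligned P C \<Theta>0 F'"
    and att_star: "attainment P (evalue_menu P C \<Theta>0 Fbar)"
    and att': "attainment P F'"
    and Q_prob: "prob_space Q" and Q_space: "space Q = UNIV"
    and br_star: "best_response P C (evalue_menu P C \<Theta>0 Fbar) br_star"
    and br': "best_response P C F' br'"
    and int_star: "integrable Q (cond_util P C u (evalue_menu P C \<Theta>0 Fbar) br_star)"
    and int': "integrable Q (cond_util P C u F' br')"
  shows "principal_utility Q P C u (evalue_menu P C \<Theta>0 Fbar) br_star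
           \<ge> principal_utility Q P C u F' br'"
proof -
  let ?Fstar = "evalue_menu P C \<Theta>0 Fbar"
  have pointwise: "cond_util P C u F' br' \<theta> \<le> cond_util P C u ?Fstar br_star \<theta>" for \<theta>
  proof (cases "\<theta> \<in> \<Theta>0")
    case True
    then show ?thesis
      using cond_util_eq_0_if_incentive_aligned[OF F'_ia True]
        cond_util_eq_0_if_incentive_aligned[OF incentive_aligned_evalue_menu[of P C \<Theta>0 Fbar] True]
      by simp
  next
    case False
    then obtain a b where "\<forall>L\<ge>0. u \<theta> L = a + b * L"
      using u_affine by blast
    moreover have "mono_on {0..} (u \<theta>)" "0 \<le> u \<theta> 0"
      using u_ok False by (auto simp: utility_ok_def)
    moreover have "F' \<subseteq> ?Fstar" "?Fstar \<subseteq> Fbar"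
      using incentive_aligned_subset_evalue_menu[OF F'_sub F'_ia] by (auto simp: evalue_menu_def)
    ultimately show ?thesis
      using cond_util_le_larger_menu[OF P_prob P_sets ambient] att_star br' br_star by blast
  qed
  show ?thesis
    unfolding principal_utility_def using int_star int' pointwise by (intro integral_mono) auto
qed

end
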